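(* Let $F\in\mathrm{Fl}_n^{\ge 0}$ and let $I$ be an extremal index of $P(F)$. Then there exist extremal indices $R_1\subsetneq R_2\subsetneq\cdots\subsetneq R_{n-1}$ of $P(F)$ with $|R_i|=i$ such that $I$ is one of the $R_i$ (so that $R_1\subsetneq\cdots\subsetneq R_{n-1}\subsetneq[n]$ is a flag of subsets of $[n]$ consisting of extremal indices).
   Context: $\mathrm{Fl}_n$ is the real complete flag variety, flags represented by invertible $n\times n$ real matrices whose top $i$ rows span the $i$-th subspace; $P_I(F)$ is the minor of a representing matrix in rows $1,\dots,|I|$ and columns $I$. $\mathrm{Fl}_n^{\ge 0}$ is the Euclidean closure of the set of flags having a totally positive representing matrix. Gale order on $k$-subsets: $\{i_1<\dots<i_k\}\le\{j_1<\dots<j_k\}$ iff $i_t\le j_t$ for all $t$. For $P=P(F)$ and a $k$-subset $I$: let $B=\{i\in I:\exists j\notin I,\ i<j,\ P_{(I\setminus i)\cup j}\ne0\}$; if $P_I\ne0$ and $B\ne\emptyset$, set $b=\max B$, $a=\max\{j\notin I:P_{(I\setminus b)\cup j}\ne0\}$, $\Xi_P(I)=(I\setminus b)\cup a$; otherwise $\Xi_P(I)=I$. For $k\in[n-1]$ let $I_k$ be the Gale-minimal $k$-subset with $P_{I_k}\ne0$; the extremal indices of $P$ are the sets $\Xi_P^m(I_k)$, $m\ge0$, $k\in[n-1]$. *)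

theory Defs
  imports Complex_Main "Jordan_Normal_Form.Determinant"
begin

(* Matrices are functions nat => nat => real, used with 1-based indices in [n] = {1..n}. *)
type_synonym rmat = "nat \<Rightarrow> nat \<Rightarrow> real"

(* the t-th smallest element (0-based) of a finite set of naturals *)
definition elt :: "nat set \<Rightarrow> nat \<Rightarrow> nat" where
  "elt S t = sorted_list_of_set S ! t"

definition minor :: "rmat \<Rightarrow> nat set \<Rightarrow> nat set \<Rightarrow> real" where
  "minor A R C = det (mat (card R) (card R) (\<lambda>(i,j). A (elt R i) (elt C j)))"

definition plucker :: "rmat \<Rightarrow> nat set \<Rightarrow> real" where
  "plucker A I = minor A {1..card I} I"

definition mat_mult :: "nat \<Rightarrow> rmat \<Rightarrow> rmat \<Rightarrow> rmat" where
  "mat_mult n A B = (\<lambda>i j. \<Sum>l=1..n. A i l * B l j)"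

definition invertible_n :: "nat \<Rightarrow> rmat \<Rightarrow> bool" where
  "invertible_n n A \<longleftrightarrow> minor A {1..n} {1..n} \<noteq> 0"

definition totally_positive :: "nat \<Rightarrow> rmat \<Rightarrow> bool" where
  "totally_positive n A \<longleftrightarrow>
     (\<forall>R C. R \<subseteq> {1..n} \<and> C \<subseteq> {1..n} \<and> R \<noteq> {} \<and> card R = card C \<longrightarrow> minor A R C > 0)"

(* invertible lower triangular matrices: exactly the change of representative of a flag *)
definition lower_tri_inv :: "nat \<Rightarrow> rmat \<Rightarrow> bool" where
  "lower_tri_inv n L \<longleftrightarrow> (\<forall>i\<in>{1..n}. \<forall>j\<in>{1..n}. i < j \<longrightarrow> L i j = 0) \<and> (\<forall>i\<in>{1..n}. L i i \<noteq> 0)"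

(* A represents a flag which has a totally positive representing matrix *)
definition tp_flag_rep :: "nat \<Rightarrow> rmat \<Rightarrow> bool" where
  "tp_flag_rep n A \<longleftrightarrow> invertible_n n A \<and>
     (\<exists>L. lower_tri_inv n L \<and> totally_positive n (mat_mult n L A))"

(* M represents a flag in the closure Fl_n^{>=0}: it is a limit of representatives of
   flags having a totally positive representing matrix *)
definition tnn_flag_rep :: "nat \<Rightarrow> rmat \<Rightarrow> bool" where
  "tnn_flag_rep n M \<longleftrightarrow> invertible_n n M \<and>
     (\<exists>A :: nat \<Rightarrow> rmat. (\<forall>k. tp_flag_rep n (A k)) \<and>
        (\<forall>i\<in>{1..n}. \<forall>j\<in>{1..n}. (\<lambda>k. A k i j) \<longlonglongrightarrow> M i j))"

definition gale_le :: "nat set \<Rightarrow> nat set \<Rightarrow> bool" where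
  "gale_le I J \<longleftrightarrow> card I = card J \<and> (\<forall>t < card I. elt I t \<le> elt J t)"

definition Xi :: "nat \<Rightarrow> (nat set \<Rightarrow> real) \<Rightarrow> nat set \<Rightarrow> nat set" where
  "Xi n P I =
    (let B = {i \<in> I. \<exists>j \<in> {1..n} - I. i < j \<and> P ((I - {i}) \<union> {j}) \<noteq> 0} in
     if P I \<noteq> 0 \<and> B \<noteq> {} then
       (let b = Max B;
            a = Max {j \<in> {1..n} - I. P ((I - {b}) \<union> {j}) \<noteq> 0}
        in (I - {b}) \<union> {a})
     else I)"

definition gale_min :: "nat \<Rightarrow> (nat set \<Rightarrow> real) \<Rightarrow> nat \<Rightarrow> nat set" where
  "gale_min n P k = (THE I. I \<subseteq> {1..n} \<and> card I = k \<and> P I \<noteq> 0 \<and>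
       (\<forall>J. J \<subseteq> {1..n} \<and> card J = k \<and> P J \<noteq> 0 \<longrightarrow> gale_le I J))"

definition extremal_indices :: "nat \<Rightarrow> rmat \<Rightarrow> nat set set" where
  "extremal_indices n M =
     {(Xi n (plucker M) ^^ m) (gale_min n (plucker M) k) | m k. k \<in> {1..n-1}}"

end

theory Submission
  imports Defs
begin

text \<open>
  Fix an invertible \<open>M\<close> and, for \<open>t \<le> n\<close>, the order \<open>1 < \<dots> < t < n < n - 1 < \<dots> < t + 1\<close>
  on \<open>[n]\<close>. Let \<open>G\<^sub>k(t)\<close> be the lexicographically first basis, for this order, of the
  columns of the top \<open>k\<close> rows of \<open>M\<close>; for \<open>t = n\<close> it is the Gale-minimal \<open>I\<^sub>k\<close>.
  In terms of the coordinates of the columns in the basis \<open>G\<^sub>k(t)\<close>, one step of \<open>\<Xi>\<close>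
  either fixes \<open>G\<^sub>k(t)\<close>, and then \<open>G\<^sub>k(s) = G\<^sub>k(t)\<close> for all \<open>s \<le> t\<close>, or exchanges
  \<open>b\<close> for \<open>a\<close>, and then the result is \<open>G\<^sub>k(b - 1)\<close> while \<open>G\<^sub>k(s) = G\<^sub>k(t)\<close> for
  \<open>b \<le> s \<le> t\<close>. Hence the extremal indices of size \<open>k\<close> are exactly the sets \<open>G\<^sub>k(t)\<close>,
  \<open>t \<le> n\<close>. A column independent of the earlier ones in the top \<open>k\<close> rows stays so in the
  top \<open>k + 1\<close> rows, so \<open>G\<^sub>k(t) \<subseteq> G\<^sub>k\<^sub>+\<^sub>1(t)\<close> and \<open>R\<^sub>i = G\<^sub>i(t)\<close> is the required flag.
\<close>

section \<open>Linear algebra of truncated columns\<close>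

(* Columns of M are cut down to the rows 1..k and referred to by their indices. *)
definition col_coeffs :: "rmat \<Rightarrow> nat \<Rightarrow> nat set \<Rightarrow> nat \<Rightarrow> (nat \<Rightarrow> real) \<Rightarrow> bool" where
  "col_coeffs M k S e c \<longleftrightarrow> (\<forall>i\<in>{1..k}. M i e = (\<Sum>s\<in>S. c s * M i s))"

definition in_col_span :: "rmat \<Rightarrow> nat \<Rightarrow> nat set \<Rightarrow> nat \<Rightarrow> bool" where
  "in_col_span M k S e \<longleftrightarrow> (\<exists>c. col_coeffs M k S e c)"

definition col_indep :: "rmat \<Rightarrow> nat \<Rightarrow> nat set \<Rightarrow> bool" where
  "col_indep M k S \<longleftrightarrow> (\<forall>c. (\<forall>i\<in>{1..k}. (\<Sum>s\<in>S. c s * M i s) = 0) \<longrightarrow> (\<forall>s\<in>S. c s = 0))"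

lemma homogeneous_system_nontrivial_solution:
  fixes A :: "nat \<Rightarrow> nat \<Rightarrow> real"
  assumes "finite R" "finite C" "card R < card C"
  shows "\<exists>c. (\<exists>j\<in>C. c j \<noteq> 0) \<and> (\<forall>i\<in>R. (\<Sum>j\<in>C. A i j * c j) = 0)"
  using assms
proof (induction R arbitrary: C A rule: finite_induct)
  case empty
  then obtain j where "j \<in> C" by fastforce
  then show ?case by (intro exI[of _ "\<lambda>_. 1"]) auto
next
  case (insert r R)
  show ?case
  proof (cases "\<forall>j\<in>C. A r j = 0")
    case True
    have "card R < card C" using insert by simp
    then obtain c where "\<exists>j\<in>C. c j \<noteq> 0" "\<forall>i\<in>R. (\<Sum>j\<in>C. A i j * c j) = 0"
      using insert.IH insert.prems(1) by blast
    with True show ?thesis by auto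
  next
    case False
    then obtain j0 where j0: "j0 \<in> C" "A r j0 \<noteq> 0" by auto
    define C' where "C' = C - {j0}"
    \<comment> \<open>Gaussian elimination: clear column \<open>j0\<close> from the rows in \<open>R\<close> using row \<open>r\<close>.\<close>
    define B where "B = (\<lambda>i j. A i j - A i j0 * A r j / A r j0)"
    have "card R < card C'"
      using insert j0 by (simp add: C'_def)
    then obtain c' where c': "\<exists>j\<in>C'. c' j \<noteq> 0" "\<forall>i\<in>R. (\<Sum>j\<in>C'. B i j * c' j) = 0"
      using insert.IH[of C' B] insert.prems by (auto simp: C'_def)
    define c where "c = (\<lambda>j. if j = j0 then - (\<Sum>j\<in>C'. A r j * c' j) / A r j0 else c' j)"
    have row: "(\<Sum>j\<in>C. A i j * c j) = A i j0 * c j0 + (\<Sum>j\<in>C'. A i j * c' j)" for i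
    proof -
      have "(\<Sum>j\<in>C'. A i j * c j) = (\<Sum>j\<in>C'. A i j * c' j)"
        by (rule sum.cong) (auto simp: c_def C'_def)
      then show ?thesis
        using sum.remove[OF insert.prems(1) j0(1), of "\<lambda>j. A i j * c j"] by (simp add: C'_def)
    qed
    have "(\<Sum>j\<in>C. A i j * c j) = 0" if i: "i \<in> insert r R" for i
    proof (cases "i = r")
      case True
      then show ?thesis using row[of r] j0(2) by (simp add: c_def)
    next
      case False
      with i c'(2) have "(\<Sum>j\<in>C'. A i j * c' j) = A i j0 / A r j0 * (\<Sum>j\<in>C'. A r j * c' j)"
        by (simp add: B_def sum_subtractf sum_distrib_left algebra_simps)
      then show ?thesis using row[of i] by (simp add: c_def)
    qed
    moreover have "\<exists>j\<in>C. c j \<noteq> 0" using c'(1) by (auto simp: c_def C'_def)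
    ultimately show ?thesis by blast
  qed
qed

lemma col_indep_card_le:
  assumes "col_indep M k S" "finite S"
  shows "card S \<le> k"
proof (rule ccontr)
  assume "\<not> card S \<le> k"
  then obtain c where "\<exists>j\<in>S. c j \<noteq> 0" "\<forall>i\<in>{1..k}. (\<Sum>j\<in>S. M i j * c j) = 0"
    using homogeneous_system_nontrivial_solution[of "{1..k}" S M] assms(2) by auto
  moreover have "(\<Sum>j\<in>S. M i j * c j) = (\<Sum>s\<in>S. c s * M i s)" for i
    by (simp add: mult.commute)
  ultimately show False using assms(1) unfolding col_indep_def by auto
qed

lemma col_indep_card_le_spanning:
  assumes "col_indep M k A" "finite A" "finite B" "\<forall>a\<in>A. in_col_span M k B a"
  shows "card A \<le> card B"
proof (rule ccontr)
  assume "\<not> card A \<le> card B"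
  from assms(4) obtain co where co: "\<forall>a\<in>A. col_coeffs M k B a (co a)"
    unfolding in_col_span_def by metis
  obtain d where d: "\<exists>j\<in>A. d j \<noteq> 0" "\<forall>b\<in>B. (\<Sum>a\<in>A. co a b * d a) = 0"
    using homogeneous_system_nontrivial_solution[of B A "\<lambda>b a. co a b"] assms(2,3) \<open>\<not> _\<close> by auto
  have "(\<Sum>a\<in>A. d a * M i a) = 0" if "i \<in> {1..k}" for i
  proof -
    have "(\<Sum>a\<in>A. d a * M i a) = (\<Sum>a\<in>A. d a * (\<Sum>b\<in>B. co a b * M i b))"
      using co that unfolding col_coeffs_def by (intro sum.cong) auto
    also have "\<dots> = (\<Sum>b\<in>B. (\<Sum>a\<in>A. co a b * d a) * M i b)"
      by (simp add: sum_distrib_left sum_distrib_right sum.swap[of _ B A] algebra_simps)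
    finally show ?thesis using d(2) by simp
  qed
  with assms(1) d(1) show False unfolding col_indep_def by blast
qed

lemma col_coeffs_restrict:
  assumes "col_coeffs M k I e c" "S \<subseteq> I" "finite I" "\<forall>x\<in>I - S. c x = 0"
  shows "col_coeffs M k S e c"
proof -
  have "(\<Sum>x\<in>S. c x * M i x) = (\<Sum>x\<in>I. c x * M i x)" for i
    by (rule sum.mono_neutral_left) (use assms in auto)
  then show ?thesis using assms(1) unfolding col_coeffs_def by simp
qed

lemma col_coeffs_extend:
  assumes "col_coeffs M k S e c" "S \<subseteq> T" "finite T"
  shows "col_coeffs M k T e (\<lambda>x. if x \<in> S then c x else 0)"
proof -
  have "(\<Sum>x\<in>T. (if x \<in> S then c x else 0) * M i x) = (\<Sum>x\<in>S. c x * M i x)" for i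
    by (rule sum.mono_neutral_cong_right) (use assms in auto)
  then show ?thesis using assms(1) unfolding col_coeffs_def by simp
qed

lemma in_col_span_mono:
  assumes "in_col_span M k S e" "S \<subseteq> T" "finite T"
  shows "in_col_span M k T e"
  using assms col_coeffs_extend unfolding in_col_span_def by blast

lemma in_col_span_base:
  assumes "e \<in> S" "finite S"
  shows "in_col_span M k S e"
proof -
  have "(\<Sum>s\<in>S. (if s = e then 1 else 0) * M i s) = M i e" for i
    using assms by (simp add: if_distrib[of "\<lambda>x. x * _"] sum.delta cong: if_cong)
  then have "col_coeffs M k S e (\<lambda>x. if x = e then 1 else 0)"
    unfolding col_coeffs_def by simp
  then show ?thesis unfolding in_col_span_def by blast
qed

lemma in_col_span_trans:
  assumes "finite S" "\<forall>x\<in>T. in_col_span M k S x" "in_col_span M k T e"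
  shows "in_col_span M k S e"
proof -
  from assms(2) obtain co where co: "\<forall>x\<in>T. col_coeffs M k S x (co x)"
    unfolding in_col_span_def by metis
  from assms(3) obtain d where d: "col_coeffs M k T e d" unfolding in_col_span_def by blast
  have "col_coeffs M k S e (\<lambda>s. \<Sum>x\<in>T. d x * co x s)"
    unfolding col_coeffs_def
  proof
    fix i assume i: "i \<in> {1..k}"
    have "M i e = (\<Sum>x\<in>T. d x * (\<Sum>s\<in>S. co x s * M i s))"
      using co d i unfolding col_coeffs_def by (auto intro: sum.cong)
    also have "\<dots> = (\<Sum>s\<in>S. (\<Sum>x\<in>T. d x * co x s) * M i s)"
      by (simp add: sum_distrib_left sum_distrib_right sum.swap[of _ S T] algebra_simps)
    finally show "M i e = (\<Sum>s\<in>S. (\<Sum>x\<in>T. d x * co x s) * M i s)" .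
  qed
  then show ?thesis unfolding in_col_span_def by blast
qed

lemma in_col_span_fewer_rows:
  "in_col_span M k S e \<Longrightarrow> k' \<le> k \<Longrightarrow> in_col_span M k' S e"
  unfolding in_col_span_def col_coeffs_def by auto

lemma col_indep_subset:
  assumes "col_indep M k S" "T \<subseteq> S" "finite S"
  shows "col_indep M k T"
  unfolding col_indep_def
proof (intro allI impI)
  fix c assume rel: "\<forall>i\<in>{1..k}. (\<Sum>s\<in>T. c s * M i s) = 0"
  define c' where "c' s = (if s \<in> T then c s else 0)" for s
  have "(\<Sum>s\<in>S. c' s * M i s) = (\<Sum>s\<in>T. c s * M i s)" for i
    unfolding c'_def by (rule sum.mono_neutral_cong_right) (use assms in auto)
  then have "\<forall>s\<in>S. c' s = 0"
    using assms(1)[unfolded col_indep_def, rule_format, of c'] rel by simp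
  then show "\<forall>s\<in>T. c s = 0" using assms(2) unfolding c'_def by (metis subsetD)
qed

lemma in_col_span_of_relation:
  assumes "finite Z" "x0 \<in> Z" "c x0 \<noteq> 0" "\<forall>i\<in>{1..k}. (\<Sum>x\<in>Z. c x * M i x) = 0"
  shows "in_col_span M k (Z - {x0}) x0"
proof -
  have "col_coeffs M k (Z - {x0}) x0 (\<lambda>x. - c x / c x0)"
    unfolding col_coeffs_def
  proof
    fix i assume "i \<in> {1..k}"
    then have "c x0 * M i x0 = - (\<Sum>x\<in>Z - {x0}. c x * M i x)"
      using assms(4) sum.remove[OF assms(1,2), of "\<lambda>x. c x * M i x"] by simp
    moreover have "M i x0 = c x0 * M i x0 / c x0" using assms(3) by simp
    ultimately have "M i x0 = - (\<Sum>x\<in>Z - {x0}. c x * M i x) / c x0" by simp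
    also have "\<dots> = (\<Sum>x\<in>Z - {x0}. - c x / c x0 * M i x)"
      by (simp add: sum_divide_distrib sum_negf)
    finally show "M i x0 = (\<Sum>x\<in>Z - {x0}. - c x / c x0 * M i x)" .
  qed
  then show ?thesis unfolding in_col_span_def by blast
qed

lemma col_indep_not_in_col_span:
  assumes "col_indep M k S" "e \<in> S" "finite S"
  shows "\<not> in_col_span M k (S - {e}) e"
proof
  assume "in_col_span M k (S - {e}) e"
  then obtain c where c: "col_coeffs M k (S - {e}) e c" unfolding in_col_span_def by blast
  define c' where "c' = (\<lambda>x. if x = e then -1 else c x)"
  have "(\<Sum>s\<in>S. c' s * M i s) = - M i e + (\<Sum>s\<in>S - {e}. c s * M i s)" for i
    using sum.remove[OF assms(3,2), of "\<lambda>s. c' s * M i s"] by (simp add: c'_def)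
  with c have "\<forall>i\<in>{1..k}. (\<Sum>s\<in>S. c' s * M i s) = 0" unfolding col_coeffs_def by simp
  with assms(1,2) have "c' e = 0" unfolding col_indep_def by blast
  then show False by (simp add: c'_def)
qed

lemma col_indep_insert:
  assumes "col_indep M k S" "finite S" "\<not> in_col_span M k S e"
  shows "col_indep M k (insert e S)"
  unfolding col_indep_def
proof (intro allI impI)
  fix c assume rel: "\<forall>i\<in>{1..k}. (\<Sum>s\<in>insert e S. c s * M i s) = 0"
  have "e \<notin> S" using assms(2,3) in_col_span_base by blast
  have "c e = 0"
    using in_col_span_of_relation[of "insert e S" e c k M] rel assms(2,3) \<open>e \<notin> S\<close> by auto
  with rel \<open>e \<notin> S\<close> assms(2) have "\<forall>i\<in>{1..k}. (\<Sum>s\<in>S. c s * M i s) = 0" by simp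
  with assms(1) \<open>c e = 0\<close> show "\<forall>s\<in>insert e S. c s = 0" unfolding col_indep_def by blast
qed

lemma in_col_span_of_basis:
  assumes "col_indep M k S" "finite S" "card S = k"
  shows "in_col_span M k S e"
proof (rule ccontr)
  assume "\<not> in_col_span M k S e"
  then have "e \<notin> S" "col_indep M k (insert e S)"
    using assms in_col_span_base col_indep_insert by blast+
  with col_indep_card_le[of M k "insert e S"] assms(2,3) show False by simp
qed

lemma col_coeffs_unique:
  assumes "col_indep M k I" "col_coeffs M k I e c" "col_coeffs M k I e d" "x \<in> I"
  shows "c x = d x"
proof -
  have "\<forall>i\<in>{1..k}. (\<Sum>s\<in>I. (c s - d s) * M i s) = 0"
    using assms(2,3) unfolding col_coeffs_def by (simp add: algebra_simps sum_subtractf)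
  then show ?thesis using assms(1,4) unfolding col_indep_def by fastforce
qed

lemma in_col_span_iff_coeffs_vanish:
  assumes "col_indep M k I" "finite I" "S \<subseteq> I" "col_coeffs M k I e c"
  shows "in_col_span M k S e \<longleftrightarrow> (\<forall>x\<in>I - S. c x = 0)"
proof
  assume "in_col_span M k S e"
  then obtain d where "col_coeffs M k S e d" unfolding in_col_span_def by blast
  then have "col_coeffs M k I e (\<lambda>x. if x \<in> S then d x else 0)"
    by (rule col_coeffs_extend[OF _ assms(3,2)])
  then show "\<forall>x\<in>I - S. c x = 0"
    using col_coeffs_unique[OF assms(1,4)] by fastforce
next
  assume "\<forall>x\<in>I - S. c x = 0"
  then show "in_col_span M k S e"
    using col_coeffs_restrict[OF assms(4,3,2)] unfolding in_col_span_def by blast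
qed

lemma col_coeffs_exchange:
  assumes ce: "col_coeffs M k I e ce" and ca: "col_coeffs M k I a ca"
    and "finite I" "b \<in> I" "a \<notin> I" "ca b \<noteq> 0"
  defines "r \<equiv> ce b / ca b"
  shows "col_coeffs M k (insert a (I - {b})) e (\<lambda>x. if x = a then r else ce x - r * ca x)"
  unfolding col_coeffs_def
proof
  fix i assume i: "i \<in> {1..k}"
  let ?I' = "I - {b}"
  have "M i a = ca b * M i b + (\<Sum>x\<in>?I'. ca x * M i x)"
    using ca i sum.remove[OF assms(3,4), of "\<lambda>x. ca x * M i x"] unfolding col_coeffs_def by auto
  moreover have "M i e = ce b * M i b + (\<Sum>x\<in>?I'. ce x * M i x)"
    using ce i sum.remove[OF assms(3,4), of "\<lambda>x. ce x * M i x"] unfolding col_coeffs_def by auto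
  moreover have "(\<Sum>x\<in>?I'. (if x = a then r else ce x - r * ca x) * M i x)
      = (\<Sum>x\<in>?I'. ce x * M i x - r * (ca x * M i x))"
    using assms(5) by (intro sum.cong) (auto simp: algebra_simps)
  then have "(\<Sum>x\<in>?I'. (if x = a then r else ce x - r * ca x) * M i x)
      = (\<Sum>x\<in>?I'. ce x * M i x) - r * (\<Sum>x\<in>?I'. ca x * M i x)"
    by (simp add: sum_subtractf sum_distrib_left)
  moreover have "r * ca b = ce b" using assms(6) by (simp add: r_def)
  ultimately show "M i e = (\<Sum>x\<in>insert a ?I'. (if x = a then r else ce x - r * ca x) * M i x)"
    using assms(3,5) by (simp add: algebra_simps)
qed

section \<open>Pluecker coordinates and invertibility\<close>

lemma det_mat_ne_0_iff:
  fixes f :: "nat \<times> nat \<Rightarrow> real"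
  shows "det (mat k k f) \<noteq> 0 \<longleftrightarrow> (\<forall>v. (\<forall>i<k. (\<Sum>j<k. f (i, j) * v j) = 0) \<longrightarrow> (\<forall>j<k. v j = 0))"
proof -
  have A: "mat k k f \<in> carrier_mat k k" by simp
  have mult: "(mat k k f *\<^sub>v w) $ i = (\<Sum>j<k. f (i, j) * w $ j)"
    if "i < k" "w \<in> carrier_vec k" for i w
    using that by (simp add: scalar_prod_def row_def lessThan_atLeast0)
  show ?thesis
  proof
    assume det: "det (mat k k f) \<noteq> 0"
    show "\<forall>v. (\<forall>i<k. (\<Sum>j<k. f (i, j) * v j) = 0) \<longrightarrow> (\<forall>j<k. v j = 0)"
    proof (intro allI impI)
      fix v j assume "\<forall>i<k. (\<Sum>j<k. f (i, j) * v j) = 0" "j < k"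
      moreover have "(mat k k f *\<^sub>v vec k v) $ i = (\<Sum>j<k. f (i, j) * v j)" if "i < k" for i
        unfolding mult[OF that vec_carrier] by (rule sum.cong) auto
      ultimately have "mat k k f *\<^sub>v vec k v = 0\<^sub>v k"
        by (intro eq_vecI) auto
      then have "vec k v = 0\<^sub>v k" using det det_0_iff_vec_prod_zero[OF A] vec_carrier by blast
      then show "v j = 0" using \<open>j < k\<close> by (metis index_vec index_zero_vec(1))
    qed
  next
    assume trivial_kernel: "\<forall>v. (\<forall>i<k. (\<Sum>j<k. f (i, j) * v j) = 0) \<longrightarrow> (\<forall>j<k. v j = 0)"
    show "det (mat k k f) \<noteq> 0"
    proof
      assume "det (mat k k f) = 0"
      then obtain w where w: "w \<in> carrier_vec k" "w \<noteq> 0\<^sub>v k" "mat k k f *\<^sub>v w = 0\<^sub>v k"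
        using det_0_iff_vec_prod_zero[OF A] by auto
      have "\<forall>i<k. (\<Sum>j<k. f (i, j) * w $ j) = 0"
        using w(1,3) mult by (metis index_zero_vec(1))
      with trivial_kernel have "\<forall>j<k. w $ j = 0" by blast
      with w(1) have "w = 0\<^sub>v k" by (intro eq_vecI) auto
      with w(2) show False ..
    qed
  qed
qed

lemma elt_atLeastAtMost: "i < m \<Longrightarrow> elt {1..m} i = Suc i"
  unfolding elt_def
  by (simp add: atLeastLessThanSuc_atLeastAtMost[symmetric] nth_upt del: upt_Suc)

lemma bij_betw_elt: "finite S \<Longrightarrow> bij_betw (elt S) {..<card S} S"
  unfolding elt_def[abs_def] by (rule bij_betw_nth) (auto simp: distinct_sorted_list_of_set)

lemma elt_strict_mono: "finite X \<Longrightarrow> i < j \<Longrightarrow> j < card X \<Longrightarrow> elt X i < elt X j"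
  unfolding elt_def using sorted_wrt_nth_less[OF strict_sorted_list_of_set[of X]] by simp

lemma ball_atLeastAtMost_Suc: "(\<forall>i\<in>{1..m}. P i) \<longleftrightarrow> (\<forall>i<m. P (Suc i))"
  unfolding image_Suc_lessThan[symmetric] by auto

lemma plucker_ne_0_iff_col_indep:
  assumes "finite S"
  shows "plucker M S \<noteq> 0 \<longleftrightarrow> col_indep M (card S) S"
proof -
  let ?k = "card S"
  have sum_elt: "(\<Sum>j<?k. M i (elt S j) * c (elt S j)) = (\<Sum>s\<in>S. c s * M i s)" for i c
    using sum.reindex_bij_betw[OF bij_betw_elt[OF assms], of "\<lambda>s. c s * M i s"]
    by (simp add: mult.commute)
  have "plucker M S = det (mat ?k ?k (\<lambda>(i, j). M (Suc i) (elt S j)))"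
    unfolding plucker_def minor_def
    by (intro arg_cong[where f = det] eq_matI) (auto simp: elt_atLeastAtMost[unfolded One_nat_def])
  then have "plucker M S \<noteq> 0 \<longleftrightarrow>
      (\<forall>v. (\<forall>i<?k. (\<Sum>j<?k. M (Suc i) (elt S j) * v j) = 0) \<longrightarrow> (\<forall>j<?k. v j = 0))"
    by (simp add: det_mat_ne_0_iff)
  also have "\<dots> \<longleftrightarrow> col_indep M ?k S"
    unfolding col_indep_def ball_atLeastAtMost_Suc
  proof safe
    fix c s assume trivial_kernel: "\<forall>v. (\<forall>i<?k. (\<Sum>j<?k. M (Suc i) (elt S j) * v j) = 0) \<longrightarrow> (\<forall>j<?k. v j = 0)"
      and rel: "\<forall>i<?k. (\<Sum>s\<in>S. c s * M (Suc i) s) = 0" and "s \<in> S"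
    from \<open>s \<in> S\<close> obtain j where "j < ?k" "s = elt S j"
      using bij_betw_imp_surj_on[OF bij_betw_elt[OF assms]] by fastforce
    moreover have "\<forall>i<?k. (\<Sum>j<?k. M (Suc i) (elt S j) * c (elt S j)) = 0"
      using rel by (simp only: sum_elt)
    ultimately show "c s = 0"
      using trivial_kernel[rule_format, of "\<lambda>j. c (elt S j)" j] by simp
  next
    fix v j assume indep: "\<forall>c. (\<forall>i<?k. (\<Sum>s\<in>S. c s * M (Suc i) s) = 0) \<longrightarrow> (\<forall>s\<in>S. c s = 0)"
      and rel: "\<forall>i<?k. (\<Sum>j<?k. M (Suc i) (elt S j) * v j) = 0" and "j < ?k"
    define c where "c = v \<circ> the_inv_into {..<?k} (elt S)"
    have c_elt: "c (elt S j) = v j" if "j < ?k" for j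
      using that bij_betw_elt[OF assms] unfolding c_def
      by (simp add: bij_betw_def the_inv_into_f_f)
    have "\<forall>i<?k. (\<Sum>s\<in>S. c s * M (Suc i) s) = 0"
    proof (intro allI impI)
      fix i assume "i < ?k"
      have "(\<Sum>j<?k. M (Suc i) (elt S j) * c (elt S j)) = (\<Sum>j<?k. M (Suc i) (elt S j) * v j)"
        by (rule sum.cong) (simp_all add: c_elt)
      then show "(\<Sum>s\<in>S. c s * M (Suc i) s) = 0" using rel \<open>i < ?k\<close> by (simp add: sum_elt)
    qed
    moreover have "elt S j \<in> S"
      using \<open>j < ?k\<close> bij_betwE[OF bij_betw_elt[OF assms]] by blast
    ultimately have "c (elt S j) = 0" using indep by blast
    then show "v j = 0" using c_elt \<open>j < ?k\<close> by simp
  qed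
  finally show ?thesis .
qed

lemma invertible_rows_indep:
  assumes "invertible_n n M" "\<forall>j\<in>{1..n}. (\<Sum>i\<in>{1..n}. y i * M i j) = 0" "i \<in> {1..n}"
  shows "y i = 0"
proof -
  let ?A = "mat n n (\<lambda>(i, j). M (Suc i) (Suc j))"
  have "minor M {1..n} {1..n} = det ?A"
    unfolding minor_def
    by (intro arg_cong[where f = det] eq_matI) (auto simp: elt_atLeastAtMost[unfolded One_nat_def])
  then have "det ?A \<noteq> 0" using assms(1) unfolding invertible_n_def by simp
  moreover have "transpose_mat ?A = mat n n (\<lambda>(i, j). M (Suc j) (Suc i))"
    by (auto simp: transpose_mat_def intro!: eq_matI)
  ultimately have "det (mat n n (\<lambda>(i, j). M (Suc j) (Suc i))) \<noteq> 0"
    using det_transpose[of ?A n] by simp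
  then have kernel: "\<forall>v. (\<forall>j<n. (\<Sum>i<n. M (Suc i) (Suc j) * v i) = 0) \<longrightarrow> (\<forall>i<n. v i = 0)"
    unfolding det_mat_ne_0_iff by simp
  have "\<forall>j<n. (\<Sum>i<n. M (Suc i) (Suc j) * y (Suc i)) = 0"
  proof (intro allI impI)
    fix j assume "j < n"
    then have "(\<Sum>i\<in>{1..n}. y i * M i (Suc j)) = 0" using assms(2) by auto
    then show "(\<Sum>i<n. M (Suc i) (Suc j) * y (Suc i)) = 0"
      by (subst (asm) image_Suc_lessThan[symmetric]) (simp add: sum.reindex mult.commute)
  qed
  then show ?thesis
    using kernel[rule_format, of "\<lambda>i. y (Suc i)" "i - 1"] assms(3) by (cases i) auto
qed

lemma card_ge_if_spans_cols:
  assumes "invertible_n n M" "k \<le> n" "finite S" "\<forall>e\<in>{1..n}. in_col_span M k S e"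
  shows "k \<le> card S"
proof (rule ccontr)
  assume "\<not> k \<le> card S"
  then obtain y where y: "\<exists>i\<in>{1..k}. y i \<noteq> 0" "\<forall>s\<in>S. (\<Sum>i\<in>{1..k}. M i s * y i) = 0"
    using homogeneous_system_nontrivial_solution[of S "{1..k}" "\<lambda>s i. M i s"] assms(3) by auto
  define y' where "y' i = (if i \<le> k then y i else 0)" for i
  have "(\<Sum>i\<in>{1..n}. y' i * M i e) = 0" if e: "e \<in> {1..n}" for e
  proof -
    obtain c where c: "col_coeffs M k S e c" using assms(4) e unfolding in_col_span_def by blast
    have "(\<Sum>i\<in>{1..n}. y' i * M i e) = (\<Sum>i\<in>{1..k}. y i * M i e)"
      unfolding y'_def by (rule sum.mono_neutral_cong_right) (use assms(2) in auto)
    also have "\<dots> = (\<Sum>i\<in>{1..k}. y i * (\<Sum>s\<in>S. c s * M i s))"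
      using c unfolding col_coeffs_def by (intro sum.cong) auto
    also have "\<dots> = (\<Sum>s\<in>S. c s * (\<Sum>i\<in>{1..k}. M i s * y i))"
      by (simp add: sum_distrib_left sum.swap[of _ S] algebra_simps)
    finally show ?thesis using y(2) by simp
  qed
  then have "\<forall>i\<in>{1..n}. y' i = 0"
    using invertible_rows_indep[OF assms(1)] by blast
  moreover obtain i where "i \<in> {1..k}" "y i \<noteq> 0" using y(1) by blast
  ultimately show False using assms(2) unfolding y'_def by (metis atLeastAtMost_iff le_trans)
qed

lemma plucker_exchange_ne_0_iff:
  assumes I: "col_indep M k I" "finite I" "card I = k"
    and "i \<in> I" "j \<notin> I" "col_coeffs M k I j c"
  shows "plucker M ((I - {i}) \<union> {j}) \<noteq> 0 \<longleftrightarrow> c i \<noteq> 0"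
proof -
  let ?S = "(I - {i}) \<union> {j}"
  have "card I \<noteq> 0" using I(2) assms(4) by auto
  then have "finite ?S" "card ?S = k"
    using I assms(4,5) by (auto simp: card_insert_if card_Diff_singleton)
  then have "plucker M ?S \<noteq> 0 \<longleftrightarrow> col_indep M k ?S"
    using plucker_ne_0_iff_col_indep by metis
  also have "\<dots> \<longleftrightarrow> \<not> in_col_span M k (I - {i}) j"
  proof
    assume "col_indep M k ?S"
    moreover have "?S - {j} = I - {i}" using assms(5) by auto
    ultimately show "\<not> in_col_span M k (I - {i}) j"
      using col_indep_not_in_col_span[of M k ?S j] \<open>finite ?S\<close> by auto
  next
    assume "\<not> in_col_span M k (I - {i}) j"
    moreover have "col_indep M k (I - {i})" using col_indep_subset[OF I(1) _ I(2)] by blast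
    ultimately show "col_indep M k ?S"
      using col_indep_insert[of M k "I - {i}" j] I(2) by simp
  qed
  also have "\<dots> \<longleftrightarrow> c i \<noteq> 0"
    using in_col_span_iff_coeffs_vanish[OF I(1,2) _ assms(6), of "I - {i}"] assms(4) by auto
  finally show ?thesis .
qed

section \<open>Greedy bases for the shifted orders\<close>

(* Position of e in the order 1 < 2 < ... < t < n < n-1 < ... < t+1 on [n]. *)
definition shift_rank :: "nat \<Rightarrow> nat \<Rightarrow> nat \<Rightarrow> nat" where
  "shift_rank n t e = (if e \<le> t then e else n + t + 1 - e)"

definition earlier :: "nat \<Rightarrow> nat \<Rightarrow> nat \<Rightarrow> nat set" where
  "earlier n t e = {y \<in> {1..n}. shift_rank n t y < shift_rank n t e}"

(* The lexicographically first basis, for that order, of the columns of the top k rows. *)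
definition greedy_basis :: "rmat \<Rightarrow> nat \<Rightarrow> nat \<Rightarrow> nat \<Rightarrow> nat set" where
  "greedy_basis M n k t = {e \<in> {1..n}. \<not> in_col_span M k (earlier n t e) e}"

lemma shift_rank_le_imp_less:
  "x \<le> n \<Longrightarrow> y \<le> n \<Longrightarrow> x \<noteq> y \<Longrightarrow> shift_rank n t x \<le> shift_rank n t y \<Longrightarrow> shift_rank n t x < shift_rank n t y"
  unfolding shift_rank_def by (auto split: if_splits)

lemma finite_earlier [simp]: "finite (earlier n t e)"
  unfolding earlier_def by simp

lemma greedy_basis_subset: "greedy_basis M n k t \<subseteq> {1..n}"
  unfolding greedy_basis_def by auto

lemma finite_greedy_basis [simp]: "finite (greedy_basis M n k t)"
  using finite_subset[OF greedy_basis_subset] by blast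

lemma col_indep_greedy_basis: "col_indep M k (greedy_basis M n k t)"
  unfolding col_indep_def
proof (intro allI impI, rule ccontr)
  let ?G = "greedy_basis M n k t"
  fix c assume rel: "\<forall>i\<in>{1..k}. (\<Sum>x\<in>?G. c x * M i x) = 0" and "\<not> (\<forall>x\<in>?G. c x = 0)"
  define Z where "Z = {x \<in> ?G. c x \<noteq> 0}"
  have "finite Z" "Z \<noteq> {}" using \<open>\<not> _\<close> by (auto simp: Z_def)
  \<comment> \<open>the latest column of a nontrivial relation is spanned by earlier ones\<close>
  then obtain x0 where x0: "x0 \<in> Z" "shift_rank n t x0 = Max (shift_rank n t ` Z)"
    using Max_in[of "shift_rank n t ` Z"] by fastforce
  then have x0_max: "\<forall>y\<in>Z. shift_rank n t y \<le> shift_rank n t x0"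
    using \<open>finite Z\<close> by simp
  have "(\<Sum>x\<in>Z. c x * M i x) = (\<Sum>x\<in>?G. c x * M i x)" for i
    unfolding Z_def by (rule sum.mono_neutral_left) auto
  then have "in_col_span M k (Z - {x0}) x0"
    using in_col_span_of_relation[OF \<open>finite Z\<close> x0(1)] x0(1) rel by (auto simp: Z_def)
  moreover have "Z - {x0} \<subseteq> earlier n t x0"
  proof
    fix y assume y: "y \<in> Z - {x0}"
    then have "y \<in> {1..n}" "x0 \<in> {1..n}"
      using x0(1) greedy_basis_subset[of M n k t] unfolding Z_def by auto
    then show "y \<in> earlier n t x0"
      using shift_rank_le_imp_less[of y n x0 t] x0_max y unfolding earlier_def by auto
  qed
  ultimately have "in_col_span M k (earlier n t x0) x0"
    by (rule in_col_span_mono) simp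
  with x0(1) show False unfolding Z_def greedy_basis_def by auto
qed

lemma greedy_basis_spans_upto:
  assumes "e \<in> {1..n}"
  shows "in_col_span M k (greedy_basis M n k t \<inter> {y. shift_rank n t y \<le> shift_rank n t e}) e"
  using assms
proof (induction "shift_rank n t e" arbitrary: e rule: less_induct)
  case less
  let ?S = "greedy_basis M n k t \<inter> {y. shift_rank n t y \<le> shift_rank n t e}"
  show ?case
  proof (cases "e \<in> greedy_basis M n k t")
    case True
    then show ?thesis by (intro in_col_span_base) auto
  next
    case False
    with less.prems have "in_col_span M k (earlier n t e) e"
      unfolding greedy_basis_def by auto
    moreover have "in_col_span M k ?S y" if "y \<in> earlier n t e" for y
    proof -
      from that have "shift_rank n t y < shift_rank n t e" "y \<in> {1..n}"
        unfolding earlier_def by auto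
      with less.hyps have "in_col_span M k (greedy_basis M n k t \<inter> {z. shift_rank n t z \<le> shift_rank n t y}) y"
        by blast
      then show ?thesis
        by (rule in_col_span_mono) (use \<open>shift_rank n t y < shift_rank n t e\<close> in auto)
    qed
    ultimately show ?thesis
      by (intro in_col_span_trans[of ?S "earlier n t e" M k]) auto
  qed
qed

lemma greedy_basis_spans_earlier:
  assumes "e \<in> {1..n} - greedy_basis M n k t"
  shows "in_col_span M k (greedy_basis M n k t \<inter> earlier n t e) e"
proof -
  have "shift_rank n t y < shift_rank n t e"
    if "y \<in> greedy_basis M n k t" "shift_rank n t y \<le> shift_rank n t e" for y
  proof -
    have "y \<le> n" "y \<noteq> e" using that(1) assms greedy_basis_subset[of M n k t] by auto
    then show ?thesis using shift_rank_le_imp_less[of y n e t] that(2) assms by auto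
  qed
  then have "greedy_basis M n k t \<inter> {y. shift_rank n t y \<le> shift_rank n t e}
      = greedy_basis M n k t \<inter> earlier n t e"
    using greedy_basis_subset[of M n k t] unfolding earlier_def by fastforce
  then show ?thesis using greedy_basis_spans_upto[of e n M k t] assms by simp
qed

lemma card_greedy_basis:
  assumes "invertible_n n M" "k \<le> n"
  shows "card (greedy_basis M n k t) = k"
proof -
  have "in_col_span M k (greedy_basis M n k t) e" if "e \<in> {1..n}" for e
    using greedy_basis_spans_upto[OF that] by (rule in_col_span_mono) auto
  then have "k \<le> card (greedy_basis M n k t)"
    using card_ge_if_spans_cols[OF assms] by simp
  moreover have "card (greedy_basis M n k t) \<le> k"
    using col_indep_card_le[OF col_indep_greedy_basis] by simp
  ultimately show ?thesis by simp
qed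

lemma greedy_basis_eqI:
  assumes J: "J \<subseteq> {1..n}" "col_indep M k J" "card J = k"
    and spans: "\<forall>e\<in>{1..n} - J. in_col_span M k (J \<inter> earlier n t e) e"
  shows "J = greedy_basis M n k t"
proof -
  have "finite J" using J(1) finite_subset by blast
  have "J \<subseteq> greedy_basis M n k t"
  proof
    fix e assume "e \<in> J"
    have span: "in_col_span M k (J \<inter> earlier n t e) y" if "y \<in> earlier n t e" for y
    proof (cases "y \<in> J")
      case True
      then show ?thesis using that \<open>finite J\<close> by (intro in_col_span_base) auto
    next
      case False
      with that spans have "in_col_span M k (J \<inter> earlier n t y) y"
        unfolding earlier_def by auto
      then show ?thesis
        by (rule in_col_span_mono) (use that \<open>finite J\<close> in \<open>auto simp: earlier_def\<close>)
    qed
    show "e \<in> greedy_basis M n k t"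
    proof (rule ccontr)
      assume "e \<notin> greedy_basis M n k t"
      then have "in_col_span M k (earlier n t e) e"
        using \<open>e \<in> J\<close> J(1) unfolding greedy_basis_def by auto
      with span have "in_col_span M k (J \<inter> earlier n t e) e"
        by (intro in_col_span_trans[of "J \<inter> earlier n t e" "earlier n t e" M k]) (auto simp: \<open>finite J\<close>)
      then have "in_col_span M k (J - {e}) e"
        by (rule in_col_span_mono) (auto simp: earlier_def \<open>finite J\<close>)
      with col_indep_not_in_col_span[OF J(2) \<open>e \<in> J\<close> \<open>finite J\<close>] show False ..
    qed
  qed
  moreover have "card (greedy_basis M n k t) \<le> card J"
    using col_indep_card_le[OF col_indep_greedy_basis] J(3) by simp
  ultimately show ?thesis using card_seteq[OF finite_greedy_basis] by blast
qed

lemma greedy_basis_mono: "greedy_basis M n k t \<subseteq> greedy_basis M n (Suc k) t"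
  unfolding greedy_basis_def using in_col_span_fewer_rows[of M "Suc k" _ _ k] by auto

lemma shift_rank_less_iff_less:
  "e \<le> t \<Longrightarrow> x \<le> n \<Longrightarrow> shift_rank n t x < shift_rank n t e \<longleftrightarrow> x < e"
  unfolding shift_rank_def by auto

lemma shift_rank_less_shift_down:
  assumes "x \<le> n" "e \<le> n" "x \<noteq> e" "shift_rank n t x < shift_rank n t e"
    and "x < e \<longrightarrow> x \<le> s" "s \<le> t"
  shows "shift_rank n s x < shift_rank n s e"
  using assms unfolding shift_rank_def by (auto split: if_splits)

lemma le_shift_if_shift_rank_less:
  "j \<le> n \<Longrightarrow> b < j \<Longrightarrow> shift_rank n t b < shift_rank n t j \<Longrightarrow> b \<le> t"
  unfolding shift_rank_def by (auto split: if_splits)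

lemma shift_rank_less_last:
  "y \<le> n \<Longrightarrow> 1 \<le> b \<Longrightarrow> b \<le> n \<Longrightarrow> y \<noteq> b \<Longrightarrow> shift_rank n (b - 1) y < shift_rank n (b - 1) b"
  unfolding shift_rank_def by auto

lemma shift_rank_less_outside:
  "1 \<le> b \<Longrightarrow> b < e \<Longrightarrow> e \<le> n \<Longrightarrow> x \<le> n \<Longrightarrow> x < b \<or> e < x
    \<Longrightarrow> shift_rank n (b - 1) x < shift_rank n (b - 1) e"
  unfolding shift_rank_def by auto

section \<open>The operator Xi on greedy bases\<close>

locale greedy_step =
  fixes M :: rmat and n k t :: nat
  assumes invertible: "invertible_n n M" and k_le_n: "k \<le> n"
begin

abbreviation I :: "nat set" where
  "I \<equiv> greedy_basis M n k t"

lemma card_I: "card I = k"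
  using card_greedy_basis[OF invertible k_le_n] .

definition coord :: "nat \<Rightarrow> nat \<Rightarrow> real" where
  "coord e = (SOME c. col_coeffs M k I e c)"

lemma col_coeffs_coord: "col_coeffs M k I e (coord e)"
  using in_col_span_of_basis[OF col_indep_greedy_basis finite_greedy_basis card_I]
  unfolding in_col_span_def coord_def by (rule someI_ex)

lemma coord_nonzero_earlier:
  assumes "e \<in> {1..n} - I" "x \<in> I" "coord e x \<noteq> 0"
  shows "shift_rank n t x < shift_rank n t e"
proof -
  have "\<forall>x\<in>I - (I \<inter> earlier n t e). coord e x = 0"
    using greedy_basis_spans_earlier[OF assms(1)] in_col_span_iff_coeffs_vanish[OF
        col_indep_greedy_basis finite_greedy_basis Int_lower1 col_coeffs_coord] by simp
  then show ?thesis using assms(2,3) unfolding earlier_def by auto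
qed

lemma plucker_exchange_iff_coord:
  "i \<in> I \<Longrightarrow> j \<in> {1..n} - I \<Longrightarrow> plucker M ((I - {i}) \<union> {j}) \<noteq> 0 \<longleftrightarrow> coord j i \<noteq> 0"
  using plucker_exchange_ne_0_iff[OF col_indep_greedy_basis finite_greedy_basis card_I _ _
      col_coeffs_coord] by simp

(* The set B of the definition of Xi (see movable_eq); b and a below are its b and a. *)
definition movable :: "nat set" where
  "movable = {x \<in> I. \<exists>j\<in>{1..n} - I. x < j \<and> coord j x \<noteq> 0}"

lemma movable_eq: "movable = {i \<in> I. \<exists>j\<in>{1..n} - I. i < j \<and> plucker M ((I - {i}) \<union> {j}) \<noteq> 0}"
  unfolding movable_def using plucker_exchange_iff_coord by blast

lemma greedy_basis_stable:
  assumes "\<forall>x\<in>movable. x \<le> s" "s \<le> t"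
  shows "greedy_basis M n k s = I"
proof (rule greedy_basis_eqI[symmetric, OF greedy_basis_subset col_indep_greedy_basis card_I],
       intro ballI)
  fix e assume e: "e \<in> {1..n} - I"
  have "shift_rank n s x < shift_rank n s e" if "x \<in> I" "coord e x \<noteq> 0" for x
  proof (rule shift_rank_less_shift_down[OF _ _ _ coord_nonzero_earlier[OF e that] _ assms(2)])
    show "x \<le> n" "e \<le> n" "x \<noteq> e" using that e greedy_basis_subset[of M n k t] by auto
    show "x < e \<longrightarrow> x \<le> s" using that e assms(1) unfolding movable_def by blast
  qed
  then have "\<forall>x\<in>I - I \<inter> earlier n s e. coord e x = 0"
    using greedy_basis_subset[of M n k t] unfolding earlier_def by auto
  then show "in_col_span M k (I \<inter> earlier n s e) e"
    using in_col_span_iff_coeffs_vanish[OF col_indep_greedy_basis finite_greedy_basis Int_lower1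
        col_coeffs_coord] by blast
qed

lemma Xi_greedy_basis_if_not_movable: "movable = {} \<Longrightarrow> Xi n (plucker M) I = I"
  unfolding Xi_def Let_def movable_eq[symmetric] by simp

definition b :: nat where
  "b = Max movable"

definition a :: nat where
  "a = Max {j \<in> {1..n} - I. coord j b \<noteq> 0}"

lemma finite_movable: "finite movable"
  unfolding movable_def by simp

lemma b_movable: "movable \<noteq> {} \<Longrightarrow> b \<in> movable"
  unfolding b_def using finite_movable by simp

lemma movable_le_b: "x \<in> movable \<Longrightarrow> x \<le> b"
  unfolding b_def using finite_movable by simp

lemma b_in_I: "movable \<noteq> {} \<Longrightarrow> b \<in> I"
  using b_movable unfolding movable_def by blast

lemma b_le_t:
  assumes "movable \<noteq> {}"
  shows "b \<le> t"
proof -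
  obtain j where j: "j \<in> {1..n} - I" "b < j" "coord j b \<noteq> 0"
    using b_movable[OF assms] unfolding movable_def by blast
  then show ?thesis
    using coord_nonzero_earlier[OF j(1) b_in_I[OF assms] j(3)] le_shift_if_shift_rank_less by auto
qed

lemma le_a: "j \<in> {1..n} - I \<Longrightarrow> coord j b \<noteq> 0 \<Longrightarrow> j \<le> a"
  unfolding a_def by (rule Max_ge) auto

lemma a_props:
  assumes "movable \<noteq> {}"
  shows "a \<in> {1..n} - I" "coord a b \<noteq> 0" "b < a"
proof -
  obtain j where j: "j \<in> {1..n} - I" "b < j" "coord j b \<noteq> 0"
    using b_movable[OF assms] unfolding movable_def by blast
  then have "a \<in> {j \<in> {1..n} - I. coord j b \<noteq> 0}"
    unfolding a_def by (intro Max_in) auto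
  then show "a \<in> {1..n} - I" "coord a b \<noteq> 0" by auto
  show "b < a" using j le_a[of j] by simp
qed

lemma Xi_greedy_basis_if_movable:
  assumes "movable \<noteq> {}"
  shows "Xi n (plucker M) I = insert a (I - {b})"
proof -
  have "plucker M I \<noteq> 0"
    using plucker_ne_0_iff_col_indep[OF finite_greedy_basis] col_indep_greedy_basis card_I by simp
  moreover have "{j \<in> {1..n} - I. plucker M ((I - {b}) \<union> {j}) \<noteq> 0} = {j \<in> {1..n} - I. coord j b \<noteq> 0}"
    using plucker_exchange_iff_coord b_in_I[OF assms] by auto
  ultimately show ?thesis
    using assms unfolding Xi_def Let_def movable_eq[symmetric] b_def[symmetric] a_def by simp
qed

lemma coord_support_beyond_b:
  assumes "j \<in> {1..n} - I" "b < j" "x \<in> I - {b}" "coord j x \<noteq> 0"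
  shows "x < b \<or> j < x"
proof -
  have "x \<noteq> j" using assms(1,3) by auto
  moreover have "x < j \<Longrightarrow> x \<le> b"
    using assms movable_le_b unfolding movable_def by blast
  ultimately show ?thesis using assms(3) by auto
qed

lemma exchanged_coeffs_earlier:
  fixes e x :: nat
  defines "r \<equiv> coord e b / coord a b"
  assumes mov: "movable \<noteq> {}" and e: "e \<in> {1..n} - I" "e \<noteq> a"
    and x: "x \<in> insert a (I - {b})" and nz: "(if x = a then r else coord e x - r * coord a x) \<noteq> 0"
  shows "shift_rank n (b - 1) x < shift_rank n (b - 1) e"
proof -
  have b: "b \<in> I" "b \<le> t" using b_in_I[OF mov] b_le_t[OF mov] .
  have "b \<in> {1..n}" "x \<le> n" "e \<in> {1..n}"
    using b(1) e(1) x a_props[OF mov] greedy_basis_subset[of M n k t] by auto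
  have "e \<noteq> b" using e(1) b(1) by auto
  consider (before) "e < b" | (after) "b < e" using \<open>e \<noteq> b\<close> by linarith
  then show ?thesis
  proof cases
    case before
    with b(2) have e_le_t: "e \<le> t" by simp
    \<comment> \<open>column \<open>e\<close> precedes \<open>b\<close> in the \<open>t\<close>-order, so \<open>b\<close> is not in its support\<close>
    have "coord e b = 0"
      using coord_nonzero_earlier[OF e(1) b(1)] shift_rank_less_iff_less[OF e_le_t, of b n]
        before \<open>b \<in> {1..n}\<close> by auto
    then have "x \<in> I" "coord e x \<noteq> 0" using x nz by (auto simp: r_def split: if_splits)
    then have "x < e"
      using coord_nonzero_earlier[OF e(1)] shift_rank_less_iff_less[OF e_le_t \<open>x \<le> n\<close>] by auto
    then show ?thesis using before shift_rank_less_iff_less[of e "b - 1" x n] \<open>x \<le> n\<close> by simp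
  next
    case after
    have "x < b \<or> e < x"
    proof (cases "x = a")
      case True
      then have "coord e b \<noteq> 0" using nz by (simp add: r_def)
      then show ?thesis using True le_a[OF e(1)] e(2) by auto
    next
      case False
      then have x: "x \<in> I - {b}" "coord e x \<noteq> 0 \<or> r \<noteq> 0 \<and> coord a x \<noteq> 0"
        using x nz by auto
      show ?thesis
      proof (cases "coord e x \<noteq> 0")
        case True
        then show ?thesis using coord_support_beyond_b[OF e(1) after x(1)] by simp
      next
        case False
        then have "coord e b \<noteq> 0" "coord a x \<noteq> 0" using x(2) by (auto simp: r_def)
        then have "e < a" using le_a[OF e(1)] e(2) by auto
        then show ?thesis
          using coord_support_beyond_b[OF _ a_props(3)[OF mov] x(1) \<open>coord a x \<noteq> 0\<close>]
            a_props(1)[OF mov] by auto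
      qed
    qed
    then show ?thesis using shift_rank_less_outside[of b e n x] \<open>b \<in> {1..n}\<close> after \<open>e \<in> {1..n}\<close>
        \<open>x \<le> n\<close> by auto
  qed
qed

lemma exchange_is_greedy_basis:
  assumes "movable \<noteq> {}"
  shows "insert a (I - {b}) = greedy_basis M n k (b - 1)"
proof -
  let ?I' = "insert a (I - {b})"
  note a = a_props[OF assms] and b = b_in_I[OF assms]
  have "?I' \<subseteq> {1..n}" "finite ?I'"
    using a(1) greedy_basis_subset[of M n k t] by auto
  have "card I \<noteq> 0" using b by auto
  then have card: "card ?I' = k" using card_I a(1) b by (simp add: card_Diff_singleton)
  have "plucker M ((I - {b}) \<union> {a}) \<noteq> 0"
    using plucker_exchange_iff_coord[OF b a(1)] a(2) by simp
  then have indep: "col_indep M k ?I'"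
    using plucker_ne_0_iff_col_indep[OF \<open>finite ?I'\<close>] card by simp
  show ?thesis
  proof (rule greedy_basis_eqI[OF \<open>?I' \<subseteq> {1..n}\<close> indep card], intro ballI)
    fix e assume e: "e \<in> {1..n} - ?I'"
    show "in_col_span M k (?I' \<inter> earlier n (b - 1) e) e"
    proof (cases "e = b")
      case True
      \<comment> \<open>\<open>b\<close> is the last element of the \<open>(b - 1)\<close>-order\<close>
      have "?I' \<subseteq> earlier n (b - 1) b"
        using \<open>?I' \<subseteq> {1..n}\<close> e True shift_rank_less_last[of _ n b] unfolding earlier_def by auto
      then show ?thesis
        using in_col_span_of_basis[OF indep \<open>finite ?I'\<close> card] True by (simp add: Int_absorb2)
    next
      case False
      then have e': "e \<in> {1..n} - I" "e \<noteq> a" using e by auto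
      let ?r = "coord e b / coord a b"
      let ?d = "\<lambda>x. if x = a then ?r else coord e x - ?r * coord a x"
      have "col_coeffs M k ?I' e ?d"
        using col_coeffs_exchange[OF col_coeffs_coord col_coeffs_coord finite_greedy_basis b _ a(2)]
          a(1) by simp
      moreover have "\<forall>x\<in>?I' - ?I' \<inter> earlier n (b - 1) e. ?d x = 0"
        using exchanged_coeffs_earlier[OF assms e'] \<open>?I' \<subseteq> {1..n}\<close>
        unfolding earlier_def by auto
      ultimately have "col_coeffs M k (?I' \<inter> earlier n (b - 1) e) e ?d"
        by (rule col_coeffs_restrict[OF _ Int_lower1 \<open>finite ?I'\<close>])
      then show ?thesis unfolding in_col_span_def by blast
    qed
  qed
qed

end

lemma Xi_greedy_basis_cases:
  assumes "invertible_n n M" "k \<le> n"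
  obtains (fixed) "Xi n (plucker M) (greedy_basis M n k t) = greedy_basis M n k t"
      "\<forall>s\<le>t. greedy_basis M n k s = greedy_basis M n k t"
    | (moved) t' where "t' < t" "Xi n (plucker M) (greedy_basis M n k t) = greedy_basis M n k t'"
      "\<forall>s. t' < s \<and> s \<le> t \<longrightarrow> greedy_basis M n k s = greedy_basis M n k t"
proof -
  interpret greedy_step M n k t using assms by unfold_locales
  show ?thesis
  proof (cases "movable = {}")
    case True
    show ?thesis
    proof (rule fixed)
      show "Xi n (plucker M) I = I" using Xi_greedy_basis_if_not_movable[OF True] .
      show "\<forall>s\<le>t. greedy_basis M n k s = I" using greedy_basis_stable True by blast
    qed
  next
    case False
    show ?thesis
    proof (rule moved)
      have "1 \<le> b" using b_in_I[OF False] greedy_basis_subset[of M n k t] by auto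
      then show "b - 1 < t" using b_le_t[OF False] by linarith
      show "Xi n (plucker M) I = greedy_basis M n k (b - 1)"
        using Xi_greedy_basis_if_movable[OF False] exchange_is_greedy_basis[OF False] by simp
      show "\<forall>s. b - 1 < s \<and> s \<le> t \<longrightarrow> greedy_basis M n k s = I"
      proof (intro allI impI)
        fix s assume s: "b - 1 < s \<and> s \<le> t"
        then have "\<forall>x\<in>movable. x \<le> s" using movable_le_b by fastforce
        then show "greedy_basis M n k s = I" using greedy_basis_stable s by blast
      qed
    qed
  qed
qed

lemma Xi_iterate_greedy_basis:
  assumes "invertible_n n M" "k \<le> n"
  shows "\<exists>t'\<le>t. (Xi n (plucker M) ^^ m) (greedy_basis M n k t) = greedy_basis M n k t'"
proof (induction m)
  case 0
  then show ?case by auto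
next
  case (Suc m)
  then obtain t' where "t' \<le> t" "(Xi n (plucker M) ^^ m) (greedy_basis M n k t) = greedy_basis M n k t'"
    by blast
  moreover obtain t'' where "t'' \<le> t'" "Xi n (plucker M) (greedy_basis M n k t') = greedy_basis M n k t''"
  proof (rule Xi_greedy_basis_cases[OF assms, of t'])
    assume "Xi n (plucker M) (greedy_basis M n k t') = greedy_basis M n k t'"
    then show thesis using that[of t'] by simp
  next
    fix t'' assume "t'' < t'" "Xi n (plucker M) (greedy_basis M n k t') = greedy_basis M n k t''"
    then show thesis using that[of t''] by simp
  qed
  ultimately show ?case by (intro exI[of _ t'']) auto
qed

lemma greedy_basis_in_Xi_orbit:
  assumes "invertible_n n M" "k \<le> n"
  shows "s \<le> t \<Longrightarrow> \<exists>m. greedy_basis M n k s = (Xi n (plucker M) ^^ m) (greedy_basis M n k t)"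
proof (induction t rule: less_induct)
  case (less t)
  show ?case
  proof (rule Xi_greedy_basis_cases[OF assms, of t])
    assume "\<forall>s\<le>t. greedy_basis M n k s = greedy_basis M n k t"
    then have "greedy_basis M n k s = greedy_basis M n k t" using less.prems by blast
    then show ?thesis by (intro exI[of _ 0]) simp
  next
    fix t' assume moved: "t' < t" "Xi n (plucker M) (greedy_basis M n k t) = greedy_basis M n k t'"
      "\<forall>s. t' < s \<and> s \<le> t \<longrightarrow> greedy_basis M n k s = greedy_basis M n k t"
    show ?thesis
    proof (cases "t' < s")
      case True
      then have "greedy_basis M n k s = greedy_basis M n k t" using moved(3) less.prems by blast
      then show ?thesis by (intro exI[of _ 0]) simp
    next
      case False
      then obtain m where "greedy_basis M n k s = (Xi n (plucker M) ^^ m) (greedy_basis M n k t')"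
        using less.IH[OF moved(1)] by (meson not_less)
      then have "greedy_basis M n k s = (Xi n (plucker M) ^^ Suc m) (greedy_basis M n k t)"
        unfolding funpow_Suc_right comp_apply moved(2) .
      then show ?thesis ..
    qed
  qed
qed

section \<open>The Gale-minimal basis\<close>

lemma Int_atMost_elt:
  assumes "finite X" "i < card X"
  shows "X \<inter> {..elt X i} = elt X ` {..i}"
proof
  show "elt X ` {..i} \<subseteq> X \<inter> {..elt X i}"
  proof
    fix x assume "x \<in> elt X ` {..i}"
    then obtain j where j: "j \<le> i" "x = elt X j" by auto
    then have "x \<in> X" using bij_betwE[OF bij_betw_elt[OF assms(1)]] assms(2) by auto
    moreover have "x \<le> elt X i"
      using elt_strict_mono[OF assms(1), of j i] j assms(2) by (cases "j = i") auto
    ultimately show "x \<in> X \<inter> {..elt X i}" by simp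
  qed
  show "X \<inter> {..elt X i} \<subseteq> elt X ` {..i}"
  proof
    fix x assume x: "x \<in> X \<inter> {..elt X i}"
    then obtain j where "j < card X" "x = elt X j"
      using bij_betw_imp_surj_on[OF bij_betw_elt[OF assms(1)]] by fastforce
    moreover have "\<not> i < j"
      using elt_strict_mono[OF assms(1), of i j] x \<open>j < card X\<close> \<open>x = elt X j\<close> by auto
    ultimately show "x \<in> elt X ` {..i}" by auto
  qed
qed

lemma card_Int_atMost_elt:
  assumes "finite X" "i < card X"
  shows "card (X \<inter> {..elt X i}) = Suc i"
proof -
  have "inj_on (elt X) {..i}"
    by (rule inj_on_subset[OF bij_betw_imp_inj_on[OF bij_betw_elt[OF assms(1)]]]) (use assms(2) in auto)
  then show ?thesis using Int_atMost_elt[OF assms] by (simp add: card_image)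
qed

lemma gale_le_if_counts_le:
  assumes "finite X" "finite Y" "card X = card Y"
    and counts: "\<forall>u. card (Y \<inter> {..u}) \<le> card (X \<inter> {..u})"
  shows "gale_le X Y"
  unfolding gale_le_def
proof (intro conjI allI impI)
  fix i assume i: "i < card X"
  show "elt X i \<le> elt Y i"
  proof (rule ccontr)
    assume "\<not> elt X i \<le> elt Y i"
    then have "card (X \<inter> {..elt Y i}) \<le> card (X \<inter> {..elt X i} - {elt X i})"
      using assms(1) by (intro card_mono) auto
    also have "\<dots> = i"
      using card_Int_atMost_elt[OF assms(1) i] bij_betwE[OF bij_betw_elt[OF assms(1)]] i
      by (simp add: card_Diff_singleton assms(1))
    finally have "card (X \<inter> {..elt Y i}) \<le> i" .
    moreover have "card (Y \<inter> {..elt Y i}) = Suc i"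
      using card_Int_atMost_elt[OF assms(2)] i assms(3) by simp
    ultimately show False using counts[rule_format, of "elt Y i"] by simp
  qed
qed (rule assms(3))

lemma gale_le_antisym:
  assumes "finite X" "finite Y" "gale_le X Y" "gale_le Y X"
  shows "X = Y"
proof -
  have "sorted_list_of_set X = sorted_list_of_set Y"
    using assms(3,4) unfolding gale_le_def elt_def
    by (intro nth_equalityI) (auto intro: antisym)
  then show ?thesis using sorted_list_of_set_inject assms(1,2) by blast
qed

lemma greedy_basis_gale_le:
  assumes "invertible_n n M" "k \<le> n" "J \<subseteq> {1..n}" "card J = k" "plucker M J \<noteq> 0"
  shows "gale_le (greedy_basis M n k n) J"
proof (rule gale_le_if_counts_le)
  let ?G = "greedy_basis M n k n"
  have "finite J" using assms(3) finite_subset by blast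
  then have indep: "col_indep M k J"
    using plucker_ne_0_iff_col_indep assms(4,5) by metis
  show "finite ?G" "finite J" by (simp_all add: \<open>finite J\<close>)
  show "card ?G = card J" using card_greedy_basis[OF assms(1,2)] assms(4) by simp
  show "\<forall>u. card (J \<inter> {..u}) \<le> card (?G \<inter> {..u})"
  proof
    fix u
    \<comment> \<open>for \<open>t = n\<close> the order is the usual one, so \<open>?G \<inter> {..u}\<close> spans the columns up to \<open>u\<close>\<close>
    have "in_col_span M k (?G \<inter> {..u}) x" if "x \<in> J \<inter> {..u}" for x
    proof -
      have "x \<in> {1..n}" using that assms(3) by auto
      have "?G \<inter> {y. shift_rank n n y \<le> shift_rank n n x} \<subseteq> ?G \<inter> {..u}"
        using greedy_basis_subset[of M n k n] that \<open>x \<in> {1..n}\<close> by (auto simp: shift_rank_def)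
      then show ?thesis
        by (rule in_col_span_mono[OF greedy_basis_spans_upto[OF \<open>x \<in> {1..n}\<close>]]) simp
    qed
    then show "card (J \<inter> {..u}) \<le> card (?G \<inter> {..u})"
      using col_indep_card_le_spanning[OF col_indep_subset[OF indep _ \<open>finite J\<close>]] \<open>finite J\<close>
      by auto
  qed
qed

lemma gale_min_eq_greedy_basis:
  assumes "invertible_n n M" "k \<le> n"
  shows "gale_min n (plucker M) k = greedy_basis M n k n"
  unfolding gale_min_def
proof (rule the_equality)
  let ?G = "greedy_basis M n k n"
  have "plucker M ?G \<noteq> 0"
    using plucker_ne_0_iff_col_indep[OF finite_greedy_basis] col_indep_greedy_basis
      card_greedy_basis[OF assms] by simp
  then show "?G \<subseteq> {1..n} \<and> card ?G = k \<and> plucker M ?G \<noteq> 0 \<and>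
      (\<forall>J. J \<subseteq> {1..n} \<and> card J = k \<and> plucker M J \<noteq> 0 \<longrightarrow> gale_le ?G J)"
    using greedy_basis_subset card_greedy_basis[OF assms] greedy_basis_gale_le[OF assms] by auto
  fix J assume J: "J \<subseteq> {1..n} \<and> card J = k \<and> plucker M J \<noteq> 0 \<and>
      (\<forall>J'. J' \<subseteq> {1..n} \<and> card J' = k \<and> plucker M J' \<noteq> 0 \<longrightarrow> gale_le J J')"
  then have "gale_le J ?G"
    using \<open>plucker M ?G \<noteq> 0\<close> greedy_basis_subset[of M n k n] card_greedy_basis[OF assms, of n]
    by blast
  moreover have "gale_le ?G J" using greedy_basis_gale_le[OF assms] J by blast
  moreover have "finite J" using J finite_subset[of J "{1..n}"] by blast
  ultimately show "J = ?G" using gale_le_antisym[OF _ finite_greedy_basis] by blast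
qed

lemma extremal_indices_eq_greedy_bases:
  assumes "invertible_n n M"
  shows "extremal_indices n M = {greedy_basis M n k t | k t. k \<in> {1..n-1} \<and> t \<le> n}"
proof (intro equalityI subsetI)
  fix J assume "J \<in> extremal_indices n M"
  then obtain m k where k: "k \<in> {1..n-1}" and J: "J = (Xi n (plucker M) ^^ m) (gale_min n (plucker M) k)"
    unfolding extremal_indices_def by blast
  have "k \<le> n" using k by auto
  then obtain t where "t \<le> n" "J = greedy_basis M n k t"
    using Xi_iterate_greedy_basis[OF assms \<open>k \<le> n\<close>, of n m] J gale_min_eq_greedy_basis[OF assms]
    by auto
  then show "J \<in> {greedy_basis M n k t | k t. k \<in> {1..n-1} \<and> t \<le> n}" using k by blast
next
  fix J assume "J \<in> {greedy_basis M n k t | k t. k \<in> {1..n-1} \<and> t \<le> n}"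
  then obtain k t where k: "k \<in> {1..n-1}" and "t \<le> n" "J = greedy_basis M n k t" by blast
  have "k \<le> n" using k by auto
  then obtain m where "J = (Xi n (plucker M) ^^ m) (greedy_basis M n k n)"
    using greedy_basis_in_Xi_orbit[OF assms _ \<open>t \<le> n\<close>] \<open>J = _\<close> by blast
  then have "J = (Xi n (plucker M) ^^ m) (gale_min n (plucker M) k)"
    using gale_min_eq_greedy_basis[OF assms \<open>k \<le> n\<close>] by simp
  then show "J \<in> extremal_indices n M" using k unfolding extremal_indices_def by blast
qed

theorem mainTheorem7:
  fixes n :: nat and M :: rmat and I :: "nat set"
  assumes "tnn_flag_rep n M"
    and "I \<in> extremal_indices n M"
  shows "\<exists>R :: nat \<Rightarrow> nat set.
           (\<forall>i\<in>{1..n-1}. R i \<in> extremal_indices n M \<and> card (R i) = i) \<and>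
           (\<forall>i. 1 \<le> i \<and> i < n - 1 \<longrightarrow> R i \<subset> R (Suc i)) \<and>
           (\<exists>i\<in>{1..n-1}. I = R i)"
proof -
  have inv: "invertible_n n M" using assms(1) unfolding tnn_flag_rep_def by simp
  note extremal = extremal_indices_eq_greedy_bases[OF inv]
  obtain k t where k: "k \<in> {1..n-1}" and "t \<le> n" "I = greedy_basis M n k t"
    using assms(2) unfolding extremal by blast
  define R where "R i = greedy_basis M n i t" for i
  have card: "card (R i) = i" if "i \<le> n" for i
    unfolding R_def using card_greedy_basis[OF inv that] .
  show ?thesis
  proof (intro exI[of _ R] conjI allI impI)
    show "\<forall>i\<in>{1..n-1}. R i \<in> extremal_indices n M \<and> card (R i) = i"
    proof
      fix i assume "i \<in> {1..n-1}"
      then show "R i \<in> extremal_indices n M \<and> card (R i) = i"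
        unfolding extremal R_def using \<open>t \<le> n\<close> card[unfolded R_def] by auto
    qed
    show "R i \<subset> R (Suc i)" if "1 \<le> i \<and> i < n - 1" for i
    proof (rule psubsetI)
      show "R i \<subseteq> R (Suc i)" unfolding R_def by (rule greedy_basis_mono)
      have "Suc i \<le> n" using that by auto
      then show "R i \<noteq> R (Suc i)" using card[of i] card[of "Suc i"] by auto
    qed
    show "\<exists>i\<in>{1..n-1}. I = R i" using k \<open>I = _\<close> unfolding R_def by blast
  qed
qed

end
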